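(* Causal graph dynamics are not necessarily monotonic: there exist sets $\Sigma,\Delta$, a finite set $\pi$ and a causal graph dynamics $F:\mathcal{G}_{\Sigma,\Delta,\pi}\to\mathcal{G}_{\Sigma,\Delta,\pi}$ and graphs $G\subseteq H$ with $F(G)\not\subseteq F(H)$.
   Context: Fix an uncountably infinite set $\mathcal{V}$ of vertex names. For sets $\Sigma,\Delta$ and a finite port set $\pi$, a graph $G$ consists of a countable $V(G)\subset\mathcal{V}$, a set $E(G)$ of pairwise disjoint two-element subsets of $V(G)\times\pi$, and partial labelings $\sigma(G):V(G)\rightharpoonup\Sigma$, $\delta(G):E(G)\rightharpoonup\Delta$; $\mathcal{G}_{\Sigma,\Delta,\pi}$ is the set of graphs. $G\subseteq H$ means componentwise inclusion of $V,E,\sigma,\delta$ (partial functions as sets of pairs). Graphs are consistent if their edge sets are jointly pairwise disjoint and labelings agree on common domains; union/intersection componentwise; $\varnothing$ empty graph. The disk $G^r_c=(H,c)$: $V(H)=B_G(c,r+1)$ (shortest-path ball), $E(H)$ the edges of $G$ with an endpoint in $B_G(c,r)$, $\sigma(H)=\sigma(G)|_{B_G(c,r)}$, $\delta(H)=\delta(G)|_{E(H)}$; $\mathcal{D}^r$ is the set of radius-$r$ disks. Renamings are bijections of $\mathcal{V}$ acting naturally on graphs and pointed graphs. A local rule of radius $r$ is $f:\mathcal{D}^r\to\mathcal{G}$ with: (1) for each renaming $R$ a renaming $R'$ with $f\circ R=R'\circ f$; (2) families of disks with empty intersection have images with empty intersection; (3) $|V(f(D))|$ uniformly bounded; (4)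 $f(G^r_u),f(G^r_v)$ consistent for all $G$ and $u,v\in V(G)$. A CGD is a map $F(G)=\bigcup_{v\in V(G)} f(G^r_v)$ for a local rule $f$. *)

theory Defs
  imports Main "HOL-Library.Countable_Set"
begin

text \<open>Graphs with vertex names of type 'v (the type plays the role of the fixed
uncountable name set), ports of type 'p (the port set pi is a finite subset),
vertex labels of type 's and edge labels of type 'd.\<close>

record ('v, 'p, 's, 'd) graph =
  gV :: "'v set"
  gE :: "('v \<times> 'p) set set"
  gsig :: "'v \<Rightarrow> 's option"
  gdel :: "('v \<times> 'p) set \<Rightarrow> 'd option"

definition is_graph :: "'s set \<Rightarrow> 'd set \<Rightarrow> 'p set \<Rightarrow> ('v, 'p, 's, 'd) graph \<Rightarrow> bool" where
  "is_graph Sig Del Pi G \<longleftrightarrow>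
     countable (gV G)
   \<and> (\<forall>e\<in>gE G. e \<subseteq> gV G \<times> Pi \<and> card e = 2)
   \<and> (\<forall>e\<in>gE G. \<forall>e'\<in>gE G. e \<noteq> e' \<longrightarrow> e \<inter> e' = {})
   \<and> dom (gsig G) \<subseteq> gV G \<and> ran (gsig G) \<subseteq> Sig
   \<and> dom (gdel G) \<subseteq> gE G \<and> ran (gdel G) \<subseteq> Del"

text \<open>Componentwise inclusion (partial functions as sets of pairs = map_le).\<close>
definition subgraph :: "('v, 'p, 's, 'd) graph \<Rightarrow> ('v, 'p, 's, 'd) graph \<Rightarrow> bool" where
  "subgraph G H \<longleftrightarrow> gV G \<subseteq> gV H \<and> gE G \<subseteq> gE H \<and> gsig G \<subseteq>\<^sub>m gsig H \<and> gdel G \<subseteq>\<^sub>m gdel H"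

definition consistent :: "('v, 'p, 's, 'd) graph \<Rightarrow> ('v, 'p, 's, 'd) graph \<Rightarrow> bool" where
  "consistent G H \<longleftrightarrow>
     (\<forall>e\<in>gE G \<union> gE H. \<forall>e'\<in>gE G \<union> gE H. e \<noteq> e' \<longrightarrow> e \<inter> e' = {})
   \<and> (\<forall>x\<in>dom (gsig G) \<inter> dom (gsig H). gsig G x = gsig H x)
   \<and> (\<forall>x\<in>dom (gdel G) \<inter> dom (gdel H). gdel G x = gdel H x)"

definition empty_graph :: "('v, 'p, 's, 'd) graph" where
  "empty_graph = \<lparr>gV = {}, gE = {}, gsig = Map.empty, gdel = Map.empty\<rparr>"

text \<open>Union of a family of graphs (componentwise; maps joined, which is the
set-theoretic union of their graphs whenever the family is consistent).\<close>
definition map_Union :: "('a \<Rightarrow> 'b option) set \<Rightarrow> 'a \<Rightarrow> 'b option" where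
  "map_Union M x = (if \<exists>m\<in>M. m x \<noteq> None then (SOME m. m \<in> M \<and> m x \<noteq> None) x else None)"

definition map_Inter :: "('a \<Rightarrow> 'b option) set \<Rightarrow> 'a \<Rightarrow> 'b option" where
  "map_Inter M x = (if \<exists>y. \<forall>m\<in>M. m x = Some y then Some (THE y. \<forall>m\<in>M. m x = Some y) else None)"

definition graph_Union :: "('v, 'p, 's, 'd) graph set \<Rightarrow> ('v, 'p, 's, 'd) graph" where
  "graph_Union S = \<lparr>gV = \<Union> (gV ` S), gE = \<Union> (gE ` S),
                    gsig = map_Union (gsig ` S), gdel = map_Union (gdel ` S)\<rparr>"

definition graph_Inter :: "('v, 'p, 's, 'd) graph set \<Rightarrow> ('v, 'p, 's, 'd) graph" where
  "graph_Inter S = \<lparr>gV = \<Inter> (gV ` S), gE = \<Inter> (gE ` S),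
                    gsig = map_Inter (gsig ` S), gdel = map_Inter (gdel ` S)\<rparr>"

definition adj :: "('v, 'p, 's, 'd) graph \<Rightarrow> 'v \<Rightarrow> 'v \<Rightarrow> bool" where
  "adj G u v \<longleftrightarrow> (\<exists>e\<in>gE G. \<exists>p q. e = {(u, p), (v, q)})"

fun ball :: "('v, 'p, 's, 'd) graph \<Rightarrow> 'v \<Rightarrow> nat \<Rightarrow> 'v set" where
  "ball G c 0 = {c}"
| "ball G c (Suc n) = ball G c n \<union> {v. \<exists>u\<in>ball G c n. adj G u v}"

definition disk :: "('v, 'p, 's, 'd) graph \<Rightarrow> 'v \<Rightarrow> nat \<Rightarrow> ('v, 'p, 's, 'd) graph \<times> 'v" where
  "disk G c r =
     (let Er = {e\<in>gE G. \<exists>(v, p)\<in>e. v \<in> ball G c r}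
      in (\<lparr>gV = ball G c (Suc r), gE = Er,
           gsig = gsig G |` ball G c r, gdel = gdel G |` Er\<rparr>, c))"

definition disks :: "'s set \<Rightarrow> 'd set \<Rightarrow> 'p set \<Rightarrow> nat \<Rightarrow> (('v, 'p, 's, 'd) graph \<times> 'v) set" where
  "disks Sig Del Pi r = {disk G c r | G c. is_graph Sig Del Pi G \<and> c \<in> gV G}"

definition ren_edge :: "('v \<Rightarrow> 'v) \<Rightarrow> ('v \<times> 'p) set \<Rightarrow> ('v \<times> 'p) set" where
  "ren_edge R e = (\<lambda>(v, p). (R v, p)) ` e"

definition ren_graph :: "('v \<Rightarrow> 'v) \<Rightarrow> ('v, 'p, 's, 'd) graph \<Rightarrow> ('v, 'p, 's, 'd) graph" where
  "ren_graph R G = \<lparr>gV = R ` gV G, gE = ren_edge R ` gE G,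
                    gsig = gsig G \<circ> inv R, gdel = gdel G \<circ> ren_edge (inv R)\<rparr>"

definition ren_pointed :: "('v \<Rightarrow> 'v) \<Rightarrow> ('v, 'p, 's, 'd) graph \<times> 'v \<Rightarrow> ('v, 'p, 's, 'd) graph \<times> 'v" where
  "ren_pointed R D = (ren_graph R (fst D), R (snd D))"

definition local_rule :: "'s set \<Rightarrow> 'd set \<Rightarrow> 'p set \<Rightarrow> nat
    \<Rightarrow> (('v, 'p, 's, 'd) graph \<times> 'v \<Rightarrow> ('v, 'p, 's, 'd) graph) \<Rightarrow> bool" where
  "local_rule Sig Del Pi r f \<longleftrightarrow>
     (\<forall>D\<in>disks Sig Del Pi r. is_graph Sig Del Pi (f D))
   \<and> (\<forall>R. bij R \<longrightarrow> (\<exists>R'. bij R' \<and> (\<forall>D\<in>disks Sig Del Pi r. f (ren_pointed R D) = ren_graph R' (f D))))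
   \<and> (\<forall>S. S \<noteq> {} \<and> S \<subseteq> disks Sig Del Pi r \<and> graph_Inter (fst ` S) = empty_graph
          \<longrightarrow> graph_Inter (f ` S) = empty_graph)
   \<and> (\<exists>b::nat. \<forall>D\<in>disks Sig Del Pi r. finite (gV (f D)) \<and> card (gV (f D)) \<le> b)
   \<and> (\<forall>G u v. is_graph Sig Del Pi G \<and> u \<in> gV G \<and> v \<in> gV G
          \<longrightarrow> consistent (f (disk G u r)) (f (disk G v r)))"

definition is_CGD :: "'s set \<Rightarrow> 'd set \<Rightarrow> 'p set
    \<Rightarrow> (('v, 'p, 's, 'd) graph \<Rightarrow> ('v, 'p, 's, 'd) graph) \<Rightarrow> bool" where
  "is_CGD Sig Del Pi F \<longleftrightarrow>
     (\<exists>r f. local_rule Sig Del Pi r f \<and>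
        (\<forall>G. is_graph Sig Del Pi G \<longrightarrow> F G = graph_Union ((\<lambda>v. f (disk G v r)) ` gV G)))"

end

theory Submission
  imports Defs
begin

text \<open>Take the radius-0 local rule that outputs the centre of a disk as an isolated vertex
when the centre is unlabelled, and nothing otherwise. Labelling the only vertex of a
one-vertex graph enlarges the graph, but makes its image under the dynamics empty.\<close>

definition unlabelled_centre_rule :: "('v, 'p, 's, 'd) graph \<times> 'v \<Rightarrow> ('v, 'p, 's, 'd) graph" where
  "unlabelled_centre_rule D =
     (if gsig (fst D) (snd D) = None
      then \<lparr>gV = {snd D}, gE = {}, gsig = Map.empty, gdel = Map.empty\<rparr>
      else empty_graph)"

lemma centre_in_ball: "c \<in> ball G c n"
  by (induction n) auto

lemma centre_in_disk_vertices:
  assumes "D \<in> disks Sig Del Pi r"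
  shows "snd D \<in> gV (fst D)"
proof -
  from assms obtain G c where "D = disk G c r"
    unfolding disks_def by blast
  then show ?thesis
    by (simp add: disk_def Let_def centre_in_ball del: ball.simps)
qed

lemma map_Inter_empty: "map_Inter {Map.empty} = Map.empty"
  by (auto simp: map_Inter_def fun_eq_iff)

lemma unlabelled_centre_rule_vertices: "gV (unlabelled_centre_rule D) \<subseteq> {snd D}"
  by (auto simp: unlabelled_centre_rule_def empty_graph_def)

lemma unlabelled_centre_rule_no_edges_labels [simp]:
  "gE (unlabelled_centre_rule D) = {}"
  "gsig (unlabelled_centre_rule D) = Map.empty"
  "gdel (unlabelled_centre_rule D) = Map.empty"
  by (auto simp: unlabelled_centre_rule_def empty_graph_def)

lemma unlabelled_centre_rule_is_graph: "is_graph Sig Del Pi (unlabelled_centre_rule D)"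
  using countable_subset[OF unlabelled_centre_rule_vertices] by (simp add: is_graph_def)

lemma unlabelled_centre_rule_renaming:
  assumes "bij R"
  shows "unlabelled_centre_rule (ren_pointed R D) = ren_graph R (unlabelled_centre_rule D)"
proof -
  have "inv R (R x) = x" for x
    using assms by (simp add: bij_is_inj)
  then have "gsig (fst (ren_pointed R D)) (snd (ren_pointed R D)) = gsig (fst D) (snd D)"
    by (simp add: ren_pointed_def ren_graph_def)
  then show ?thesis
    by (simp add: unlabelled_centre_rule_def ren_graph_def ren_pointed_def empty_graph_def
        comp_def)
qed

lemma unlabelled_centre_rule_Inter:
  assumes "S \<noteq> {}" "S \<subseteq> disks Sig Del Pi r" "graph_Inter (fst ` S) = empty_graph"
  shows "graph_Inter (unlabelled_centre_rule ` S) = empty_graph"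
proof -
  have no_common_vertex: "\<Inter> (gV ` unlabelled_centre_rule ` S) = {}"
  proof (rule ccontr)
    assume "\<Inter> (gV ` unlabelled_centre_rule ` S) \<noteq> {}"
    then obtain x where x: "\<And>D. D \<in> S \<Longrightarrow> x \<in> gV (unlabelled_centre_rule D)"
      by blast
    have "x \<in> gV (fst D)" if "D \<in> S" for D
    proof -
      have "x = snd D"
        using x[OF that] unlabelled_centre_rule_vertices[of D] by blast
      with that assms(2) show ?thesis
        using centre_in_disk_vertices by blast
    qed
    then have "x \<in> gV (graph_Inter (fst ` S))"
      by (simp add: graph_Inter_def)
    with assms(3) show False
      by (simp add: empty_graph_def)
  qed
  have "gsig ` unlabelled_centre_rule ` S = {Map.empty}"
    "gdel ` unlabelled_centre_rule ` S = {Map.empty}"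
    "gE ` unlabelled_centre_rule ` S = {{}}"
    using assms(1) by (simp_all add: image_image image_constant_conv)
  with no_common_vertex show ?thesis
    by (simp add: graph_Inter_def empty_graph_def map_Inter_empty)
qed

lemma local_rule_unlabelled_centre_rule: "local_rule Sig Del Pi r unlabelled_centre_rule"
  unfolding local_rule_def
proof (intro conjI allI impI ballI)
  show "\<exists>R'. bij R' \<and> (\<forall>D\<in>disks Sig Del Pi r.
          unlabelled_centre_rule (ren_pointed R D) = ren_graph R' (unlabelled_centre_rule D))"
    if "bij R" for R
    using that unlabelled_centre_rule_renaming by blast
  have "finite (gV (unlabelled_centre_rule D)) \<and> card (gV (unlabelled_centre_rule D)) \<le> 1" for D
    using card_mono[OF _ unlabelled_centre_rule_vertices[of D]]
      finite_subset[OF unlabelled_centre_rule_vertices[of D]]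
    by simp
  then show "\<exists>b::nat. \<forall>D\<in>disks Sig Del Pi r.
          finite (gV (unlabelled_centre_rule D)) \<and> card (gV (unlabelled_centre_rule D)) \<le> b"
    by blast
  show "graph_Inter (unlabelled_centre_rule ` S) = empty_graph"
    if "S \<noteq> {} \<and> S \<subseteq> disks Sig Del Pi r \<and> graph_Inter (fst ` S) = empty_graph" for S
    using that unlabelled_centre_rule_Inter by blast
qed (simp_all add: unlabelled_centre_rule_is_graph consistent_def)

definition unlabelled_centre_dynamics :: "('v, 'p, 's, 'd) graph \<Rightarrow> ('v, 'p, 's, 'd) graph" where
  "unlabelled_centre_dynamics G = graph_Union ((\<lambda>v. unlabelled_centre_rule (disk G v 0)) ` gV G)"

lemma is_CGD_unlabelled_centre_dynamics: "is_CGD Sig Del Pi unlabelled_centre_dynamics"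
  unfolding is_CGD_def unlabelled_centre_dynamics_def
  using local_rule_unlabelled_centre_rule by blast

definition point_graph :: "'v \<Rightarrow> 's option \<Rightarrow> ('v, 'p, 's, 'd) graph" where
  "point_graph c l = \<lparr>gV = {c}, gE = {}, gsig = Map.empty(c := l), gdel = Map.empty\<rparr>"

lemma unlabelled_centre_dynamics_point_graph_vertices:
  "gV (unlabelled_centre_dynamics (point_graph c l)) = (if l = None then {c} else {})"
  by (simp add: unlabelled_centre_dynamics_def point_graph_def graph_Union_def
      unlabelled_centre_rule_def disk_def empty_graph_def)

lemma not_subgraph_unlabelled_centre_dynamics_point_graph:
  "\<not> subgraph (unlabelled_centre_dynamics (point_graph c None))
               (unlabelled_centre_dynamics (point_graph c (Some s)))"
  by (simp add: subgraph_def unlabelled_centre_dynamics_point_graph_vertices)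

lemma point_graph_is_graph:
  assumes "set_option l \<subseteq> Sig"
  shows "is_graph Sig Del Pi (point_graph c l)"
  using assms by (auto simp: is_graph_def point_graph_def ran_def)

lemma subgraph_point_graph_label: "subgraph (point_graph c None) (point_graph c l)"
  by (simp add: subgraph_def point_graph_def map_le_def)

theorem proposition2p11:
  assumes "uncountable (UNIV :: 'v set)"
  shows "\<exists>(Sig :: nat set) (Del :: nat set) (Pi :: nat set)
            (F :: ('v, nat, nat, nat) graph \<Rightarrow> ('v, nat, nat, nat) graph) G H.
           finite Pi \<and> is_CGD Sig Del Pi F
         \<and> is_graph Sig Del Pi G \<and> is_graph Sig Del Pi H
         \<and> subgraph G H \<and> \<not> subgraph (F G) (F H)"
proof -
  fix c :: 'v
  let ?F = "unlabelled_centre_dynamics :: ('v, nat, nat, nat) graph \<Rightarrow> _"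
    and ?G = "point_graph c None" and ?H = "point_graph c (Some 0)"
  have "is_CGD {0} {} {} ?F"
    by (rule is_CGD_unlabelled_centre_dynamics)
  moreover have "is_graph {0} {} {} ?G" "is_graph {0} {} {} ?H"
    by (simp_all add: point_graph_is_graph)
  moreover have "subgraph ?G ?H"
    by (rule subgraph_point_graph_label)
  moreover have "\<not> subgraph (?F ?G) (?F ?H)"
    by (rule not_subgraph_unlabelled_centre_dynamics_point_graph)
  ultimately show ?thesis
    by (intro exI[of _ "{0}"] exI[of _ "{}"] exI[of _ ?F] exI[of _ ?G] exI[of _ ?H]) simp
qed

end
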